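(* Consider the nonpreemptive Lazy Bureaucrat Problem in which every job has unit processing time ($t_1=\cdots=t_n=1$) and all data are integers. The Latest Due Date (LDD) policy — at each integer time $\tau$ at which the processor is free, if some job is executable at $\tau$, start an executable job with the largest deadline (ties broken arbitrarily) — produces a feasible schedule that minimizes objective (1), the total amount of executed work, over all feasible schedules.
   Context: An instance of the Lazy Bureaucrat Problem (LBP) consists of jobs $1,\dots,n$; job $i$ has a processing time $t_i$, an arrival time $a_i$ and a deadline $d_i$, all nonnegative integers. Its critical time is $c_i=d_i-t_i$. A single processor (the bureaucrat) processes at most one job at a time. In the nonpreemptive setting, a schedule chooses a set of executed jobs and, for each executed job $i$, a start time $s_i$ with $a_i\le s_i\le c_i$; job $i$ is then processed without interruption during $[s_i,s_i+t_i)$, these intervals are pairwise disjoint, and each job is executed at most once. A job $i$ is executable at time $\tau$ if it has not been started before $\tau$ and $a_i\le\tau\le c_i$. A schedule is feasible if it satisfies the busy requirement: at every time $\tau$ at which the processor is not processing a job, no job is executable. Objective (1) is the total time spent working, $\sum t_i$ over executed jobs, to be minimized over feasible schedules. *)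

theory Defs
  imports Main "HOL.Real"
begin

(* Jobs are 0..n-1; processing times t, arrival times a, deadlines d are
   nonnegative integers (nat). A schedule is a set E of executed jobs together
   with (real-valued) start times s. *)

definition crit :: "(nat \<Rightarrow> nat) \<Rightarrow> (nat \<Rightarrow> nat) \<Rightarrow> nat \<Rightarrow> real" where
  "crit t d i = real (d i) - real (t i)"

definition executable ::
  "nat \<Rightarrow> (nat \<Rightarrow> nat) \<Rightarrow> (nat \<Rightarrow> nat) \<Rightarrow> (nat \<Rightarrow> nat) \<Rightarrow> nat set \<Rightarrow> (nat \<Rightarrow> real) \<Rightarrow> nat \<Rightarrow> real \<Rightarrow> bool" where
  "executable n t a d E s i \<tau> \<longleftrightarrow>
     i < n \<and> \<not> (i \<in> E \<and> s i < \<tau>) \<and> real (a i) \<le> \<tau> \<and> \<tau> \<le> crit t d i"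

definition busy :: "(nat \<Rightarrow> nat) \<Rightarrow> nat set \<Rightarrow> (nat \<Rightarrow> real) \<Rightarrow> real \<Rightarrow> bool" where
  "busy t E s \<tau> \<longleftrightarrow> (\<exists>i\<in>E. s i \<le> \<tau> \<and> \<tau> < s i + real (t i))"

definition schedule ::
  "nat \<Rightarrow> (nat \<Rightarrow> nat) \<Rightarrow> (nat \<Rightarrow> nat) \<Rightarrow> (nat \<Rightarrow> nat) \<Rightarrow> nat set \<Rightarrow> (nat \<Rightarrow> real) \<Rightarrow> bool" where
  "schedule n t a d E s \<longleftrightarrow>
     E \<subseteq> {..<n} \<and>
     (\<forall>i\<in>E. real (a i) \<le> s i \<and> s i \<le> crit t d i) \<and>
     (\<forall>i\<in>E. \<forall>j\<in>E. i \<noteq> j \<longrightarrow>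
        {s i..<s i + real (t i)} \<inter> {s j..<s j + real (t j)} = {})"

definition feasible ::
  "nat \<Rightarrow> (nat \<Rightarrow> nat) \<Rightarrow> (nat \<Rightarrow> nat) \<Rightarrow> (nat \<Rightarrow> nat) \<Rightarrow> nat set \<Rightarrow> (nat \<Rightarrow> real) \<Rightarrow> bool" where
  "feasible n t a d E s \<longleftrightarrow>
     schedule n t a d E s \<and>
     (\<forall>\<tau>::real. \<not> busy t E s \<tau> \<longrightarrow> \<not> (\<exists>i. executable n t a d E s i \<tau>))"

definition work :: "(nat \<Rightarrow> nat) \<Rightarrow> nat set \<Rightarrow> nat" where
  "work t E = (\<Sum>i\<in>E. t i)"

abbreviation unit_t :: "nat \<Rightarrow> nat" where
  "unit_t \<equiv> (\<lambda>_. 1)"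

(* A schedule produced by the LDD policy (unit processing times): jobs start only
   at integer times; at every integer time tau (where the processor is free, which
   with unit jobs at integer starts is every integer time), if some job is
   executable then a job is started at tau, and the started job has the largest
   deadline among the jobs executable at tau (ties arbitrary). *)
definition LDD_schedule ::
  "nat \<Rightarrow> (nat \<Rightarrow> nat) \<Rightarrow> (nat \<Rightarrow> nat) \<Rightarrow> nat set \<Rightarrow> (nat \<Rightarrow> real) \<Rightarrow> bool" where
  "LDD_schedule n a d E s \<longleftrightarrow>
     schedule n unit_t a d E s \<and>
     (\<forall>i\<in>E. s i \<in> \<int>) \<and>
     (\<forall>\<tau>::int.
        (\<forall>i\<in>E. s i = real_of_int \<tau> \<longrightarrow>
            (\<forall>j. executable n unit_t a d E s j (real_of_int \<tau>) \<longrightarrow> d j \<le> d i)) \<and>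
        ((\<exists>j. executable n unit_t a d E s j (real_of_int \<tau>)) \<longrightarrow>
            (\<exists>i\<in>E. s i = real_of_int \<tau>)))"

end

theory Submission
  imports Defs
begin

(* Feasibility: LDD starts unit jobs at integer times only, and a job executable at a real
   time \<tau> is already executable at \<lfloor>\<tau>\<rfloor>, where LDD starts some job that covers \<tau>.

   Optimality: every feasible schedule S' is busy at every LDD start time k.  Otherwise let
   t0 < k be the last integer slot in which LDD does not start a job with deadline \<ge> d x,
   where x is the LDD job started at k.  The LDD jobs of the slots t0+1, ..., k all have
   deadline \<ge> d x, and by the LDD rule none of them had arrived by t0.  Since S' is idle at
   k, it must have completed all these k - t0 jobs inside [t0+1, k), which holds only
   k - t0 - 1 unit jobs.  Hence the map sending an LDD job to the job S' is processing at
   its start time is well defined, and it is injective because LDD jobs start at distinct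
   integers. *)

lemma schedule_finite: "schedule n t a d E s \<Longrightarrow> finite E"
  unfolding schedule_def by (meson finite_lessThan finite_subset)

lemma unit_schedule_separated:
  assumes "schedule n unit_t a d E s" "i \<in> E" "j \<in> E" "i \<noteq> j"
  shows "s j + 1 \<le> s i \<or> s i + 1 \<le> s j"
proof (rule ccontr)
  assume "\<not> ?thesis"
  then have "max (s i) (s j) \<in> {s i..<s i + 1} \<inter> {s j..<s j + 1}" by auto
  moreover have "{s i..<s i + 1} \<inter> {s j..<s j + 1} = {}"
    using assms unfolding schedule_def by auto
  ultimately show False by blast
qed

lemma unit_schedule_inj_on_start:
  assumes "schedule n unit_t a d E s"
  shows "inj_on s E"
  by (rule inj_onI) (use unit_schedule_separated[OF assms] in force)

lemma card_le_if_separated: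
  fixes A :: "real set" and l u :: int
  assumes sub: "A \<subseteq> {of_int l..<of_int u}"
    and sep: "\<And>x y. x \<in> A \<Longrightarrow> y \<in> A \<Longrightarrow> x \<noteq> y \<Longrightarrow> 1 \<le> \<bar>x - y\<bar>"
  shows "card A \<le> nat (u - l)"
proof -
  have "inj_on floor A"
  proof (rule inj_onI, rule ccontr)
    fix x y assume "x \<in> A" "y \<in> A" "\<lfloor>x\<rfloor> = \<lfloor>y\<rfloor>" "x \<noteq> y"
    then have "1 \<le> \<bar>x - y\<bar>" using sep by blast
    moreover have "of_int \<lfloor>x\<rfloor> \<le> x" "x < of_int \<lfloor>x\<rfloor> + 1"
      and "of_int \<lfloor>y\<rfloor> \<le> y" "y < of_int \<lfloor>y\<rfloor> + 1" by linarith+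
    ultimately show False using \<open>\<lfloor>x\<rfloor> = \<lfloor>y\<rfloor>\<close> by linarith
  qed
  moreover have "floor ` A \<subseteq> {l..<u}"
    using sub by (auto simp: le_floor_iff floor_less_iff)
  ultimately have "card A \<le> card {l..<u}" by (rule card_inj_on_le) simp
  then show ?thesis by simp
qed

lemma feasible_idle_imp_finished:
  assumes "feasible n t a d E s" "\<not> busy t E s \<tau>"
    and "j < n" "real (a j) \<le> \<tau>" "\<tau> \<le> crit t d j"
  shows "j \<in> E \<and> s j + real (t j) \<le> \<tau>"
proof -
  have "\<not> executable n t a d E s j \<tau>" using assms(1,2) unfolding feasible_def by blast
  then have "j \<in> E" "s j < \<tau>" using assms(3-5) unfolding executable_def by auto
  with assms(2) show ?thesis unfolding busy_def by force
qed

lemma LDD_schedule_feasible: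
  assumes L: "LDD_schedule n a d E s"
  shows "feasible n unit_t a d E s"
proof -
  have starts: "\<exists>i\<in>E. s i = of_int \<tau>" if "executable n unit_t a d E s j (of_int \<tau>)" for j \<tau>
    using L that unfolding LDD_schedule_def by blast
  have "\<not> executable n unit_t a d E s j \<tau>" if idle: "\<not> busy unit_t E s \<tau>" for j \<tau>
  proof
    assume ex: "executable n unit_t a d E s j \<tau>"
    define k where "k = \<lfloor>\<tau>\<rfloor>"
    have k: "of_int k \<le> \<tau>" "\<tau> < of_int k + 1" unfolding k_def by linarith+
    have "int (a j) \<le> k" using ex unfolding k_def executable_def by (simp add: le_floor_iff)
    then have "real (a j) \<le> of_int k" by (metis of_int_le_iff of_int_of_nat_eq)
    then have "executable n unit_t a d E s j (of_int k)"
      using ex k unfolding executable_def by auto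
    then obtain i where "i \<in> E" "s i = of_int k" using starts by blast
    with k have "busy unit_t E s \<tau>" unfolding busy_def by force
    with idle show False by blast
  qed
  then show ?thesis using L unfolding feasible_def LDD_schedule_def by blast
qed

lemma LDD_arrival_after_slot:
  assumes L: "LDD_schedule n a d E s" and j: "j \<in> E" "of_int \<tau> < s j"
    and slot: "\<forall>i\<in>E. s i = of_int \<tau> \<longrightarrow> d i < d j"
  shows "of_int \<tau> < real (a j)"
proof (rule ccontr)
  assume "\<not> ?thesis"
  moreover have "j < n" "s j \<le> crit unit_t d j"
    using L j unfolding LDD_schedule_def schedule_def by auto
  ultimately have ex: "executable n unit_t a d E s j (of_int \<tau>)"
    using j unfolding executable_def by auto
  then obtain i where i: "i \<in> E" "s i = of_int \<tau>"
    using L unfolding LDD_schedule_def by blast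
  then have "d j \<le> d i" using L ex unfolding LDD_schedule_def by blast
  with slot i show False by force
qed

lemma LDD_job_done_in_idle_feasible:
  assumes L: "LDD_schedule n a d E s" and F: "feasible n unit_t a d E' s'"
    and idle: "\<not> busy unit_t E' s' (of_int k)"
    and j: "j \<in> E" "of_int t0 < s j" "s j \<le> of_int k" "of_int k \<le> crit unit_t d j"
    and slot: "\<forall>i\<in>E. s i = of_int t0 \<longrightarrow> d i < d j"
  shows "j \<in> E' \<and> of_int (t0 + 1) \<le> s' j \<and> s' j + 1 \<le> of_int k"
proof -
  have "j < n" "real (a j) \<le> s j" using L j(1) unfolding LDD_schedule_def schedule_def by auto
  then have E': "j \<in> E' \<and> s' j + 1 \<le> of_int k"
    using feasible_idle_imp_finished[OF F idle] j(3,4) by auto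
  have "of_int t0 < real (a j)" using LDD_arrival_after_slot[OF L j(1,2) slot] .
  then have "t0 < int (a j)" by (metis of_int_less_iff of_int_of_nat_eq)
  then have "of_int (t0 + 1) \<le> real (a j)" by (metis add1_zle_eq of_int_le_iff of_int_of_nat_eq)
  also have "\<dots> \<le> s' j" using F E' unfolding feasible_def schedule_def by auto
  finally show ?thesis using E' by blast
qed

lemma obtain_last_int_below:
  fixes l k :: int
  assumes "P l" "l < k"
  obtains t where "t < k" "P t" "\<And>u. t < u \<Longrightarrow> u < k \<Longrightarrow> \<not> P u"
proof -
  define T where "T = {t \<in> {l..<k}. P t}"
  have "finite T" unfolding T_def by (rule finite_subset[of _ "{l..<k}"]) auto
  moreover have "l \<in> T" using assms unfolding T_def by simp
  ultimately have max: "Max T \<in> T" and ge: "\<And>u. u \<in> T \<Longrightarrow> u \<le> Max T" by (auto intro: Max_in)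
  have "\<not> P u" if "Max T < u" "u < k" for u
    using that max ge[of u] unfolding T_def by fastforce
  moreover have "Max T < k" "P (Max T)" using max unfolding T_def by auto
  ultimately show ?thesis using that by blast
qed

lemma feasible_busy_at_LDD_starts:
  assumes L: "LDD_schedule n a d E s" and F: "feasible n unit_t a d E' s'" and x: "x \<in> E"
  shows "busy unit_t E' s' (s x)"
proof (rule ccontr)
  assume idle: "\<not> busy unit_t E' s' (s x)"
  have sch: "schedule n unit_t a d E s" and sch': "schedule n unit_t a d E' s'"
    using L F unfolding LDD_schedule_def feasible_def by auto
  obtain k where k: "s x = of_int k" using L x unfolding LDD_schedule_def by (meson Ints_cases)
  have start_ge_0: "0 \<le> s i" if "i \<in> E" for i
    using sch that unfolding schedule_def by (meson of_nat_0_le_iff order_trans)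
  define blocked where "blocked t \<longleftrightarrow> \<not> (\<exists>i\<in>E. s i = of_int t \<and> d x \<le> d i)" for t
  have "blocked (-1)" using start_ge_0 unfolding blocked_def by force
  moreover have "-1 < k" using start_ge_0[OF x] k by simp
  ultimately
  obtain t0 where t0: "t0 < k" "blocked t0" and full: "\<And>t. t0 < t \<Longrightarrow> t < k \<Longrightarrow> \<not> blocked t"
    by (rule obtain_last_int_below) auto
  define J where "J = {j \<in> E. of_int t0 < s j \<and> s j \<le> of_int k \<and> d x \<le> d j}"
  have finite_J: "finite J" using schedule_finite[OF sch] unfolding J_def by simp
  have "(of_int ` {t0<..k} :: real set) \<subseteq> s ` J"
  proof
    fix \<sigma> :: real assume "\<sigma> \<in> of_int ` {t0<..k}"
    then obtain t where t: "t0 < t" "t \<le> k" "\<sigma> = of_int t" by auto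
    then have "\<exists>i\<in>E. s i = of_int t \<and> d x \<le> d i"
      using full[of t] x k unfolding blocked_def by (cases "t = k") auto
    with t show "\<sigma> \<in> s ` J" unfolding J_def by force
  qed
  then have "card (of_int ` {t0<..k} :: real set) \<le> card J"
    using finite_J by (meson card_image_le card_mono finite_imageI order_trans)
  then have card_J: "nat (k - t0) \<le> card J"
    by (simp add: card_image inj_on_def)
  have done_before: "j \<in> E' \<and> of_int (t0 + 1) \<le> s' j \<and> s' j + 1 \<le> of_int k" if "j \<in> J" for j
  proof (rule LDD_job_done_in_idle_feasible[OF L F idle[unfolded k]])
    show "j \<in> E" "of_int t0 < s j" "s j \<le> of_int k" using that unfolding J_def by auto
    have "d x \<le> d j" using that unfolding J_def by simp
    then show "of_int k \<le> crit unit_t d j"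
      using sch x k unfolding schedule_def crit_def by force
    show "\<forall>i\<in>E. s i = of_int t0 \<longrightarrow> d i < d j"
      using t0(2) \<open>d x \<le> d j\<close> unfolding blocked_def by force
  qed
  have "s' ` J \<subseteq> {of_int (t0 + 1)..<of_int k}" using done_before by fastforce
  moreover have "1 \<le> \<bar>y - z\<bar>" if "y \<in> s' ` J" "z \<in> s' ` J" "y \<noteq> z" for y z
    using that done_before unit_schedule_separated[OF sch'] by fastforce
  ultimately have "card (s' ` J) \<le> nat (k - (t0 + 1))" by (rule card_le_if_separated)
  moreover have "inj_on s' J"
    using unit_schedule_inj_on_start[OF sch'] done_before by (meson inj_on_subset subsetI)
  ultimately show False using card_J t0(1) by (simp add: card_image)
qed

lemma LDD_card_le_feasible:
  assumes L: "LDD_schedule n a d E s" and F: "feasible n unit_t a d E' s'"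
  shows "card E \<le> card E'"
proof -
  have sch: "schedule n unit_t a d E s" and sch': "schedule n unit_t a d E' s'"
    using L F unfolding LDD_schedule_def feasible_def by auto
  have "\<forall>i\<in>E. \<exists>j\<in>E'. s' j \<le> s i \<and> s i < s' j + 1"
    using feasible_busy_at_LDD_starts[OF L F] unfolding busy_def by auto
  then obtain h where h: "\<And>i. i \<in> E \<Longrightarrow> h i \<in> E' \<and> s' (h i) \<le> s i \<and> s i < s' (h i) + 1"
    by metis
  have "inj_on h E"
  proof (rule inj_onI, rule ccontr)
    fix i i' assume "i \<in> E" "i' \<in> E" "h i = h i'" "i \<noteq> i'"
    then have "s i' + 1 \<le> s i \<or> s i + 1 \<le> s i'" using unit_schedule_separated[OF sch] by blast
    then show False using h[OF \<open>i \<in> E\<close>] h[OF \<open>i' \<in> E\<close>] \<open>h i = h i'\<close> by auto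
  qed
  moreover have "h ` E \<subseteq> E'" using h by auto
  moreover note schedule_finite[OF sch']
  ultimately show ?thesis by (rule card_inj_on_le)
qed

lemma arg_max_on_greatest:
  fixes f :: "'a \<Rightarrow> 'b::linorder"
  assumes "finite S" "S \<noteq> {}"
  shows "arg_max_on f S \<in> S \<and> (\<forall>y\<in>S. f y \<le> f (arg_max_on f S))"
proof -
  have "Max (f ` S) \<in> f ` S" using assms by simp
  then obtain m where "m \<in> S" "f m = Max (f ` S)" by auto
  then have "is_arg_max f (\<lambda>x. x \<in> S) m" using assms(1) by (simp add: is_arg_max_linorder)
  then have "is_arg_max f (\<lambda>x. x \<in> S) (arg_max_on f S)"
    unfolding arg_max_on_def arg_max_def by (rule someI)
  then show ?thesis by (simp add: is_arg_max_linorder)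
qed

text \<open>For unit jobs, \<open>\<tau> < d j\<close> is the condition \<open>\<tau> \<le> c\<^sub>j\<close>.\<close>

context
  fixes n :: nat and a d :: "nat \<Rightarrow> nat"
begin

definition pending :: "nat set \<Rightarrow> nat \<Rightarrow> nat set" where
  "pending S \<tau> = {j. j < n \<and> j \<notin> S \<and> a j \<le> \<tau> \<and> \<tau> < d j}"

definition ldd_pick :: "nat set \<Rightarrow> nat \<Rightarrow> nat option" where
  "ldd_pick S \<tau> = (if pending S \<tau> = {} then None else Some (arg_max_on d (pending S \<tau>)))"

primrec started :: "nat \<Rightarrow> nat set" where
  "started 0 = {}"
| "started (Suc \<tau>) = started \<tau> \<union> set_option (ldd_pick (started \<tau>) \<tau>)"

definition ldd_job :: "nat \<Rightarrow> nat option" where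
  "ldd_job \<tau> = ldd_pick (started \<tau>) \<tau>"

definition ldd_jobs :: "nat set" where
  "ldd_jobs = {j. \<exists>\<tau>. ldd_job \<tau> = Some j}"

definition ldd_start :: "nat \<Rightarrow> real" where
  "ldd_start j = real (THE \<tau>. ldd_job \<tau> = Some j)"

lemma ldd_job_SomeD:
  assumes "ldd_job \<tau> = Some j"
  shows "j \<in> pending (started \<tau>) \<tau> \<and> (\<forall>j'\<in>pending (started \<tau>) \<tau>. d j' \<le> d j)"
proof -
  have "finite (pending (started \<tau>) \<tau>)"
    by (rule finite_subset[of _ "{..<n}"]) (auto simp: pending_def)
  with assms show ?thesis
    unfolding ldd_job_def ldd_pick_def by (auto split: if_splits dest: arg_max_on_greatest)
qed

lemma ldd_job_NoneD: "ldd_job \<tau> = None \<Longrightarrow> pending (started \<tau>) \<tau> = {}"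
  unfolding ldd_job_def ldd_pick_def by (auto split: if_splits)

lemma started_iff: "j \<in> started \<tau> \<longleftrightarrow> (\<exists>t<\<tau>. ldd_job t = Some j)"
  by (induction \<tau>) (auto simp: ldd_job_def less_Suc_eq)

lemma ldd_job_unique:
  assumes "ldd_job t = Some j" "ldd_job t' = Some j"
  shows "t = t'"
proof (rule ccontr)
  assume "t \<noteq> t'"
  then have "j \<in> started t \<or> j \<in> started t'"
    using assms started_iff by (metis linorder_neqE_nat)
  then show False using assms by (auto dest!: ldd_job_SomeD simp: pending_def)
qed

lemma ldd_start_eq:
  assumes "ldd_job \<tau> = Some j"
  shows "ldd_start j = real \<tau>"
proof -
  have "(THE t. ldd_job t = Some j) = \<tau>"
    using assms ldd_job_unique by (intro the_equality) auto
  then show ?thesis unfolding ldd_start_def by simp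
qed

lemma pending_if_executable:
  assumes ex: "executable n unit_t a d ldd_jobs ldd_start j (real \<tau>)"
  shows "j \<in> pending (started \<tau>) \<tau>"
proof -
  have "j \<notin> started \<tau>"
  proof
    assume "j \<in> started \<tau>"
    then obtain t where "t < \<tau>" and t: "ldd_job t = Some j" using started_iff by blast
    then have "j \<in> ldd_jobs" "ldd_start j < real \<tau>"
      using ldd_start_eq[OF t] by (auto simp: ldd_jobs_def)
    then show False using ex by (simp add: executable_def)
  qed
  then show ?thesis using ex by (simp add: pending_def executable_def crit_def)
qed

lemma LDD_schedule_exists: "LDD_schedule n a d ldd_jobs ldd_start"
  unfolding LDD_schedule_def schedule_def
proof (intro conjI ballI allI impI)
  show "ldd_jobs \<subseteq> {..<n}" using ldd_job_SomeD by (auto simp: ldd_jobs_def pending_def)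
next
  fix i assume "i \<in> ldd_jobs"
  then obtain \<tau> where \<tau>: "ldd_job \<tau> = Some i" by (auto simp: ldd_jobs_def)
  then have "a i \<le> \<tau>" "\<tau> < d i" using ldd_job_SomeD by (auto simp: pending_def)
  then show "real (a i) \<le> ldd_start i" "ldd_start i \<le> crit unit_t d i" "ldd_start i \<in> \<int>"
    using ldd_start_eq[OF \<tau>] by (auto simp: crit_def)
next
  fix i j assume "i \<in> ldd_jobs" "j \<in> ldd_jobs" "i \<noteq> j"
  then obtain \<tau>i \<tau>j where \<tau>i: "ldd_job \<tau>i = Some i" and \<tau>j: "ldd_job \<tau>j = Some j"
    by (auto simp: ldd_jobs_def)
  with \<open>i \<noteq> j\<close> have "\<tau>i \<noteq> \<tau>j" by auto
  then have "real \<tau>i + 1 \<le> real \<tau>j \<or> real \<tau>j + 1 \<le> real \<tau>i" by linarith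
  then show "{ldd_start i..<ldd_start i + real (unit_t i)} \<inter> {ldd_start j..<ldd_start j + real (unit_t j)} = {}"
    unfolding ldd_start_eq[OF \<tau>i] ldd_start_eq[OF \<tau>j] by auto
next
  fix \<tau> :: int and i j
  assume i: "i \<in> ldd_jobs" "ldd_start i = of_int \<tau>"
    and ex: "executable n unit_t a d ldd_jobs ldd_start j (of_int \<tau>)"
  obtain t where t: "ldd_job t = Some i" using i by (auto simp: ldd_jobs_def)
  then have "executable n unit_t a d ldd_jobs ldd_start j (real t)"
    using ex i ldd_start_eq[OF t] by simp
  then show "d j \<le> d i" using t pending_if_executable ldd_job_SomeD by blast
next
  fix \<tau> :: int
  assume "\<exists>j. executable n unit_t a d ldd_jobs ldd_start j (of_int \<tau>)"
  then obtain j where ex: "executable n unit_t a d ldd_jobs ldd_start j (of_int \<tau>)" by blast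
  then have "0 \<le> \<tau>" unfolding executable_def by linarith
  then obtain t where t: "\<tau> = int t" using nonneg_int_cases by blast
  then have "j \<in> pending (started t) t" using ex pending_if_executable by simp
  then obtain i where i: "ldd_job t = Some i" using ldd_job_NoneD by fastforce
  then show "\<exists>i\<in>ldd_jobs. ldd_start i = of_int \<tau>" using ldd_start_eq[OF i] t by (auto simp: ldd_jobs_def)
qed

end

theorem theorem3:
  fixes n :: nat and a d :: "nat \<Rightarrow> nat"
  shows "(\<exists>E s. LDD_schedule n a d E s) \<and>
         (\<forall>E s. LDD_schedule n a d E s \<longrightarrow>
            feasible n unit_t a d E s \<and>
            (\<forall>E' s'. feasible n unit_t a d E' s' \<longrightarrow> work unit_t E \<le> work unit_t E'))"
proof -
  have "work unit_t E = card E" for E by (simp add: work_def)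
  then show ?thesis using LDD_schedule_exists LDD_schedule_feasible LDD_card_le_feasible by metis
qed

end
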